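(* Let $G$ be a graph and $k\ge1$. Then $M_k(G)$ is a trivial matroid if and only if $G$ has no subgraph $F$ such that $F$ is a cacti-graph and $\Delta F=k$.
   Context: Graphs are finite, may have loops and parallel edges, and have no isolated vertices. A leaf is a vertex incident to exactly one edge, which is not a loop. $\Delta H=|E(H)|-|V(H)|$. A cacti-graph is a graph with no isolated vertices, no leaves, and no component that is a cycle. For $X\subseteq E(G)$, $G\langle X\rangle$ is the subgraph with edge set $X$ and vertex set the vertices incident to $X$. For $k\ge0$, $M_k(G)$ is the matroid on $E(G)$ whose circuits are the inclusion-minimal members of $\{C\subseteq E(G):C\neq\emptyset,\ |C|=|V(G\langle C\rangle)|+k\}$. A matroid on $E$ is trivial if $E$ is a base or a cobase (equivalently it has no circuit or no cocircuit), and non-trivial otherwise. *)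

theory Defs
  imports Main
begin

text \<open>A graph (loops and parallel edges allowed, no isolated vertices) is given by a
  finite edge set E and an incidence map ends, assigning to each edge its set of
  one (loop) or two end vertices. Vertices are exactly the vertices incident to edges.\<close>

definition is_graph :: "'e set \<Rightarrow> ('e \<Rightarrow> 'v set) \<Rightarrow> bool" where
  "is_graph E ends \<longleftrightarrow> finite E \<and> (\<forall>e\<in>E. card (ends e) = 1 \<or> card (ends e) = 2)"

definition verts :: "('e \<Rightarrow> 'v set) \<Rightarrow> 'e set \<Rightarrow> 'v set" where
  "verts ends X = (\<Union>e\<in>X. ends e)"

definition Delta :: "('e \<Rightarrow> 'v set) \<Rightarrow> 'e set \<Rightarrow> int" where
  "Delta ends X = int (card X) - int (card (verts ends X))"

definition is_leaf :: "('e \<Rightarrow> 'v set) \<Rightarrow> 'e set \<Rightarrow> 'v \<Rightarrow> bool" where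
  "is_leaf ends X v \<longleftrightarrow> (\<exists>e. {f\<in>X. v \<in> ends f} = {e} \<and> card (ends e) = 2)"

definition degree :: "('e \<Rightarrow> 'v set) \<Rightarrow> 'e set \<Rightarrow> 'v \<Rightarrow> nat" where
  "degree ends X v = (\<Sum>e\<in>{f\<in>X. v \<in> ends f}. if card (ends e) = 1 then 2 else 1)"

definition adj :: "('e \<Rightarrow> 'v set) \<Rightarrow> 'e set \<Rightarrow> 'v \<Rightarrow> 'v \<Rightarrow> bool" where
  "adj ends X u w \<longleftrightarrow> (\<exists>e\<in>X. u \<in> ends e \<and> w \<in> ends e)"

definition connected_edges :: "('e \<Rightarrow> 'v set) \<Rightarrow> 'e set \<Rightarrow> bool" where
  "connected_edges ends X \<longleftrightarrow>
     (\<forall>u\<in>verts ends X. \<forall>w\<in>verts ends X. (adj ends X)\<^sup>*\<^sup>* u w)"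

definition component :: "('e \<Rightarrow> 'v set) \<Rightarrow> 'e set \<Rightarrow> 'v \<Rightarrow> 'e set" where
  "component ends X v = {e\<in>X. \<exists>u\<in>ends e. (adj ends X)\<^sup>*\<^sup>* v u}"

definition is_cycle :: "('e \<Rightarrow> 'v set) \<Rightarrow> 'e set \<Rightarrow> bool" where
  "is_cycle ends Y \<longleftrightarrow> Y \<noteq> {} \<and> connected_edges ends Y \<and>
     (\<forall>u\<in>verts ends Y. degree ends Y u = 2)"

text \<open>G<X> is a cacti-graph (it has no isolated vertices by construction).\<close>
definition is_cacti :: "('e \<Rightarrow> 'v set) \<Rightarrow> 'e set \<Rightarrow> bool" where
  "is_cacti ends X \<longleftrightarrow> (\<forall>v\<in>verts ends X. \<not> is_leaf ends X v) \<and>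
     (\<forall>v\<in>verts ends X. \<not> is_cycle ends (component ends X v))"

definition Mk_circuit :: "'e set \<Rightarrow> ('e \<Rightarrow> 'v set) \<Rightarrow> nat \<Rightarrow> 'e set \<Rightarrow> bool" where
  "Mk_circuit E ends k C \<longleftrightarrow>
     C \<subseteq> E \<and> C \<noteq> {} \<and> card C = card (verts ends C) + k \<and>
     (\<forall>D. D \<subset> C \<longrightarrow> \<not> (D \<noteq> {} \<and> card D = card (verts ends D) + k))"

definition Mk_indep :: "'e set \<Rightarrow> ('e \<Rightarrow> 'v set) \<Rightarrow> nat \<Rightarrow> 'e set \<Rightarrow> bool" where
  "Mk_indep E ends k I \<longleftrightarrow> I \<subseteq> E \<and> (\<forall>C. Mk_circuit E ends k C \<longrightarrow> \<not> C \<subseteq> I)"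

definition Mk_base :: "'e set \<Rightarrow> ('e \<Rightarrow> 'v set) \<Rightarrow> nat \<Rightarrow> 'e set \<Rightarrow> bool" where
  "Mk_base E ends k B \<longleftrightarrow> Mk_indep E ends k B \<and>
     (\<forall>I. Mk_indep E ends k I \<longrightarrow> B \<subseteq> I \<longrightarrow> I = B)"

text \<open>Trivial: E is a base or a cobase (i.e. E - E = {} is a base).\<close>
definition Mk_trivial :: "'e set \<Rightarrow> ('e \<Rightarrow> 'v set) \<Rightarrow> nat \<Rightarrow> bool" where
  "Mk_trivial E ends k \<longleftrightarrow> Mk_base E ends k E \<or> Mk_base E ends k (E - E)"

end

theory Submission
  imports Defs
begin

text \<open>A graph has a circuit of \<open>M\<^sub>k\<close> iff it has an edge set \<open>X\<close> with \<open>\<Delta>X = k\<close>,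
  since an inclusion-minimal such set is a circuit; and \<open>M\<^sub>k\<close> is trivial iff it has no
  circuit, because for \<open>k \<ge> 1\<close> every single edge is independent. An inclusion-minimal
  edge set with \<open>\<Delta>X \<ge> k\<close> is a cacti-graph with \<open>\<Delta>X = k\<close>: deleting one edge lowers \<open>\<Delta>\<close> by
  at most one, while deleting the edge at a leaf or a whole cycle component does not
  lower it at all.\<close>

lemma is_graph_subset: "is_graph E ends \<Longrightarrow> X \<subseteq> E \<Longrightarrow> is_graph X ends"
  unfolding is_graph_def by (blast intro: finite_subset)

lemma card_ends_pos: "is_graph E ends \<Longrightarrow> e \<in> E \<Longrightarrow> card (ends e) \<ge> 1"
  unfolding is_graph_def by force

lemma finite_verts:
  assumes "is_graph X ends"
  shows "finite (verts ends X)"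
  unfolding verts_def
proof (rule finite_UN_I)
  show "finite X" using assms unfolding is_graph_def by blast
  show "finite (ends e)" if "e \<in> X" for e
    using card_ends_pos[OF assms that] by (simp add: card_ge_0_finite)
qed

lemma verts_mono: "X \<subseteq> Y \<Longrightarrow> verts ends X \<subseteq> verts ends Y"
  unfolding verts_def by blast

lemma verts_empty [simp]: "verts ends {} = {}"
  unfolding verts_def by simp

lemma Delta_empty [simp]: "Delta ends {} = 0"
  unfolding Delta_def by simp

lemma ex_minimal_subset:
  assumes "finite X" and "P X"
  shows "\<exists>Y\<subseteq>X. P Y \<and> (\<forall>Z\<subset>Y. \<not> P Z)"
  using assms
proof (induction X rule: finite_psubset_induct)
  case (psubset X)
  show ?case
  proof (cases "\<exists>Z\<subset>X. P Z")
    case True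
    then obtain Z where Z: "Z \<subset> X" "P Z" by blast
    from psubset.IH[OF Z] obtain Y where "Y \<subseteq> Z" "P Y" "\<forall>Z'\<subset>Y. \<not> P Z'" by blast
    with Z(1) show ?thesis by (intro exI[of _ Y]) auto
  next
    case False
    with psubset.prems show ?thesis by (intro exI[of _ X]) auto
  qed
qed

lemma Delta_Diff_singleton_ge:
  assumes "is_graph X ends" and "e \<in> X"
  shows "Delta ends (X - {e}) \<ge> Delta ends X - 1"
proof -
  have "card (verts ends (X - {e})) \<le> card (verts ends X)"
    using assms by (intro card_mono finite_verts verts_mono) auto
  moreover have "card (X - {e}) = card X - 1" "card X \<ge> 1"
    using assms by (auto simp: is_graph_def card_gt_0_iff Suc_le_eq)
  ultimately show ?thesis unfolding Delta_def by linarith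
qed

lemma Delta_Diff_leaf_edge_ge:
  assumes "is_graph X ends" and "{f\<in>X. v \<in> ends f} = {e}"
  shows "Delta ends (X - {e}) \<ge> Delta ends X"
proof -
  have fV: "finite (verts ends X)" using assms(1) by (rule finite_verts)
  have v: "v \<in> verts ends X" and eX: "e \<in> X" using assms(2) unfolding verts_def by blast+
  have "verts ends (X - {e}) \<subseteq> verts ends X - {v}"
    using assms(2) unfolding verts_def by blast
  hence "card (verts ends (X - {e})) \<le> card (verts ends X - {v})"
    using fV by (intro card_mono) auto
  also have "\<dots> = card (verts ends X) - 1" using fV v by simp
  finally have "card (verts ends (X - {e})) \<le> card (verts ends X) - 1" .
  moreover have "card (verts ends X) \<ge> 1" using fV v by (auto simp: card_gt_0_iff Suc_le_eq)
  moreover have "card (X - {e}) = card X - 1" "card X \<ge> 1"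
    using assms(1) eX by (auto simp: is_graph_def card_gt_0_iff Suc_le_eq)
  ultimately show ?thesis unfolding Delta_def by linarith
qed

lemma sum_degree:
  assumes "is_graph Y ends"
  shows "(\<Sum>v\<in>verts ends Y. degree ends Y v) = 2 * card Y"
proof -
  define w where "w e = (if card (ends e) = 1 then 2 else (1::nat))" for e
  have fY: "finite Y" and fV: "finite (verts ends Y)"
    using assms finite_verts unfolding is_graph_def by blast+
  have "degree ends Y v = (\<Sum>e\<in>Y. if v \<in> ends e then w e else 0)" for v
    unfolding degree_def w_def[symmetric] using sum.inter_filter[OF fY, of w "\<lambda>e. v \<in> ends e"] by simp
  hence "(\<Sum>v\<in>verts ends Y. degree ends Y v)
        = (\<Sum>v\<in>verts ends Y. \<Sum>e\<in>Y. if v \<in> ends e then w e else 0)"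
    by simp
  also have "\<dots> = (\<Sum>e\<in>Y. \<Sum>v\<in>verts ends Y. if v \<in> ends e then w e else 0)"
    by (rule sum.swap)
  also have "\<dots> = (\<Sum>e\<in>Y. w e * card (ends e))"
  proof (rule sum.cong[OF refl])
    fix e assume "e \<in> Y"
    hence "{v\<in>verts ends Y. v \<in> ends e} = ends e" unfolding verts_def by blast
    thus "(\<Sum>v\<in>verts ends Y. if v \<in> ends e then w e else 0) = w e * card (ends e)"
      using sum.inter_filter[OF fV, of "\<lambda>v. w e" "\<lambda>v. v \<in> ends e"] by (simp add: mult.commute)
  qed
  also have "\<dots> = (\<Sum>e\<in>Y. 2)"
    using assms unfolding is_graph_def w_def by (intro sum.cong) auto
  finally show ?thesis by simp
qed

lemma Delta_cycle:
  assumes "is_graph Y ends" and "is_cycle ends Y"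
  shows "Delta ends Y = 0"
proof -
  have "(\<Sum>v\<in>verts ends Y. degree ends Y v) = 2 * card (verts ends Y)"
    using assms(2) unfolding is_cycle_def by simp
  thus ?thesis using sum_degree[OF assms(1)] unfolding Delta_def by simp
qed

lemma verts_Diff_component:
  "verts ends (X - component ends X v) = verts ends X - verts ends (component ends X v)"
  (is "verts ends (X - ?C) = _")
proof -
  have "w \<notin> verts ends ?C" if f: "f \<in> X" "f \<notin> ?C" "w \<in> ends f" for f w
  proof
    assume "w \<in> verts ends ?C"
    then obtain e u where "e \<in> X" "w \<in> ends e" "u \<in> ends e" "(adj ends X)\<^sup>*\<^sup>* v u"
      unfolding verts_def component_def by blast
    hence "(adj ends X)\<^sup>*\<^sup>* v w" by (meson adj_def rtranclp.rtrancl_into_rtrancl)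
    thus False using f unfolding component_def by blast
  qed
  thus ?thesis unfolding verts_def by blast
qed

lemma Delta_Diff_cycle_component:
  assumes "is_graph X ends" and "is_cycle ends (component ends X v)"
  shows "Delta ends (X - component ends X v) = Delta ends X"
proof -
  let ?C = "component ends X v"
  have CX: "?C \<subseteq> X" unfolding component_def by blast
  have gC: "is_graph ?C ends" using is_graph_subset[OF assms(1) CX] .
  have "card (X - ?C) = card X - card ?C" "card ?C \<le> card X"
    using assms(1) CX by (auto simp: is_graph_def card_Diff_subset card_mono finite_subset)
  moreover have "card (verts ends (X - ?C)) = card (verts ends X) - card (verts ends ?C)"
    "card (verts ends ?C) \<le> card (verts ends X)"
    using finite_verts[OF assms(1)] card_Diff_subset[OF finite_verts[OF gC] verts_mono[OF CX]]
    by (auto simp: verts_Diff_component intro: card_mono[OF finite_verts[OF assms(1)] verts_mono[OF CX]])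
  moreover have "Delta ends ?C = 0" using Delta_cycle[OF gC assms(2)] .
  ultimately show ?thesis unfolding Delta_def by linarith
qed

lemma minimal_Delta_ge_is_cacti:
  assumes g: "is_graph X ends" and "k \<ge> 1" and D: "Delta ends X \<ge> int k"
    and minimal: "\<And>Y. Y \<subset> X \<Longrightarrow> Delta ends Y < int k"
  shows "Delta ends X = int k" and "is_cacti ends X"
proof -
  obtain e where e: "e \<in> X" using D \<open>k \<ge> 1\<close> by (fastforce simp: Delta_def)
  have "Delta ends (X - {e}) < int k" using minimal e by blast
  thus eq: "Delta ends X = int k"
    using Delta_Diff_singleton_ge[OF g e] D by linarith
  have "\<not> is_leaf ends X v" for v
  proof
    assume "is_leaf ends X v"
    then obtain e where e: "{f\<in>X. v \<in> ends f} = {e}" unfolding is_leaf_def by blast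
    have "Delta ends (X - {e}) < int k" using minimal e by blast
    thus False using Delta_Diff_leaf_edge_ge[OF g e] eq by linarith
  qed
  moreover have "\<not> is_cycle ends (component ends X v)" for v
  proof
    assume cycle: "is_cycle ends (component ends X v)"
    hence "X - component ends X v \<subset> X"
      unfolding is_cycle_def component_def by blast
    hence "Delta ends (X - component ends X v) < int k" by (rule minimal)
    thus False using Delta_Diff_cycle_component[OF g cycle] eq by linarith
  qed
  ultimately show "is_cacti ends X" unfolding is_cacti_def by blast
qed

lemma ex_Mk_circuit_iff_Delta:
  assumes "is_graph E ends"
  shows "(\<exists>C. Mk_circuit E ends k C) \<longleftrightarrow>
           (\<exists>X. X \<subseteq> E \<and> X \<noteq> {} \<and> Delta ends X = int k)"
proof
  assume "\<exists>X. X \<subseteq> E \<and> X \<noteq> {} \<and> Delta ends X = int k"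
  then obtain X where X: "X \<subseteq> E" "X \<noteq> {}" "Delta ends X = int k" by blast
  let ?P = "\<lambda>D. D \<noteq> {} \<and> card D = card (verts ends D) + k"
  have "finite X" using assms X(1) unfolding is_graph_def by (blast intro: finite_subset)
  moreover have "?P X" using X(2,3) unfolding Delta_def by simp
  ultimately obtain C where "C \<subseteq> X" "?P C" "\<forall>D\<subset>C. \<not> ?P D"
    using ex_minimal_subset[of X ?P] by blast
  hence "Mk_circuit E ends k C" using X(1) unfolding Mk_circuit_def by blast
  thus "\<exists>C. Mk_circuit E ends k C" ..
next
  assume "\<exists>C. Mk_circuit E ends k C"
  then obtain C where "C \<subseteq> E" "C \<noteq> {}" "card C = card (verts ends C) + k"
    unfolding Mk_circuit_def by blast
  moreover from this(3) have "Delta ends C = int k" unfolding Delta_def by simp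
  ultimately show "\<exists>X. X \<subseteq> E \<and> X \<noteq> {} \<and> Delta ends X = int k" by blast
qed

lemma Mk_indep_singleton:
  assumes "is_graph E ends" and "k \<ge> 1" and "e \<in> E"
  shows "Mk_indep E ends k {e}"
  unfolding Mk_indep_def
proof (intro conjI allI impI notI)
  fix C assume C: "Mk_circuit E ends k C" and "C \<subseteq> {e}"
  hence "C = {e}" unfolding Mk_circuit_def by blast
  thus False using C card_ends_pos[OF assms(1,3)] assms(2)
    by (simp add: Mk_circuit_def verts_def)
qed (use assms(3) in simp)

lemma Mk_trivial_iff_no_circuit:
  assumes "is_graph E ends" and "k \<ge> 1"
  shows "Mk_trivial E ends k \<longleftrightarrow> \<not> (\<exists>C. Mk_circuit E ends k C)"
proof -
  have "\<not> Mk_trivial E ends k" if C: "Mk_circuit E ends k C" for C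
  proof -
    obtain e where "e \<in> C" using C unfolding Mk_circuit_def by blast
    hence "Mk_indep E ends k {e}"
      using C Mk_indep_singleton[OF assms] unfolding Mk_circuit_def by blast
    hence "\<not> Mk_base E ends k (E - E)" unfolding Mk_base_def by blast
    moreover have "\<not> Mk_base E ends k E"
      using C unfolding Mk_base_def Mk_indep_def Mk_circuit_def by blast
    ultimately show ?thesis unfolding Mk_trivial_def by blast
  qed
  moreover have "Mk_trivial E ends k" if "\<not> (\<exists>C. Mk_circuit E ends k C)"
    using that by (auto simp: Mk_trivial_def Mk_base_def Mk_indep_def)
  ultimately show ?thesis by blast
qed

lemma ex_Delta_iff_ex_cacti:
  assumes "is_graph E ends" and "k \<ge> 1"
  shows "(\<exists>X. X \<subseteq> E \<and> X \<noteq> {} \<and> Delta ends X = int k) \<longleftrightarrow>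
           (\<exists>X. X \<subseteq> E \<and> is_cacti ends X \<and> Delta ends X = int k)"
proof
  assume "\<exists>X. X \<subseteq> E \<and> X \<noteq> {} \<and> Delta ends X = int k"
  then obtain X where X: "X \<subseteq> E" "Delta ends X = int k" by blast
  have "finite X" using assms(1) X(1) unfolding is_graph_def by (blast intro: finite_subset)
  moreover have "Delta ends X \<ge> int k" using X(2) by simp
  ultimately obtain Y where Y: "Y \<subseteq> X" "Delta ends Y \<ge> int k"
    and minimal: "\<forall>Z\<subset>Y. \<not> Delta ends Z \<ge> int k"
    using ex_minimal_subset[of X "\<lambda>Y. Delta ends Y \<ge> int k"] by auto
  have gY: "is_graph Y ends" using is_graph_subset assms(1) X(1) Y(1) by blast
  have "Delta ends Z < int k" if "Z \<subset> Y" for Z using minimal[rule_format, OF that] by simp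
  hence "Delta ends Y = int k" "is_cacti ends Y"
    using minimal_Delta_ge_is_cacti[OF gY assms(2) Y(2)] by simp_all
  thus "\<exists>X. X \<subseteq> E \<and> is_cacti ends X \<and> Delta ends X = int k" using X(1) Y(1) by blast
next
  assume "\<exists>X. X \<subseteq> E \<and> is_cacti ends X \<and> Delta ends X = int k"
  then obtain X where "X \<subseteq> E" "Delta ends X = int k" by blast
  moreover from this(2) have "X \<noteq> {}" using assms(2) by auto
  ultimately show "\<exists>X. X \<subseteq> E \<and> X \<noteq> {} \<and> Delta ends X = int k" by blast
qed

theorem mainTheorem11:
  fixes E :: "'e set" and ends :: "'e \<Rightarrow> 'v set" and k :: nat
  assumes "is_graph E ends" and "k \<ge> 1"
  shows "Mk_trivial E ends k \<longleftrightarrow>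
           \<not> (\<exists>X. X \<subseteq> E \<and> is_cacti ends X \<and> Delta ends X = int k)"
  using Mk_trivial_iff_no_circuit[OF assms] ex_Mk_circuit_iff_Delta[OF assms(1)]
    ex_Delta_iff_ex_cacti[OF assms] by simp

end
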